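(* Let $k\ge2$, $n\ge0$, $T\in\mathcal{T}^k_n$ and $\pi=\phi(T)$. Then $\operatorname{asc}(\pi)=\operatorname{casc}(T)$, $\operatorname{des}(\pi)=\operatorname{cdes}(T)$ and $\operatorname{plat}(\pi)=\operatorname{emp}(T)$.
   Context: For $k\ge2$, $\mathcal{T}^k_n$ is the set of plane rooted trees with $n$ edges labeled bijectively by $\{1,\dots,n\}$, in which every non-root vertex has $k-2$ unlabeled half-edges separating its children into $k-1$ ordered, possibly empty, compartments (the root has no half-edges). For a non-root vertex $c$ with parent-edge label $\ell$, set $W(c)=\ell\,U_1\,\ell\,U_2\,\ell\cdots\ell\,U_{k-1}\,\ell$, where $U_j$ is the concatenation of $W(c')$ over the children $c'$ in the $j$-th compartment of $c$, left to right; $\phi(T)$ is the concatenation of $W(c)$ over the root's children, left to right. For a sequence $\pi_1\cdots\pi_r$: $i\in\{1,\dots,r\}$ is a descent if $\pi_i>\pi_{i+1}$ or $i=r$; $i\in\{0,\dots,r-1\}$ is an ascent if $i=0$ or $\pi_i<\pi_{i+1}$; $i\in\{1,\dots,r-1\}$ is a plateau if $\pi_i=\pi_{i+1}$; $\operatorname{des},\operatorname{asc},\operatorname{plat}$ count these. Cyclic counts: $\operatorname{cdes}(\pi)=|\{i\in\{1,\dots,r\}:\pi_i>\pi_{i+1}\}|$ and $\operatorname{casc}(\pi)=|\{i\in\{1,\dots,r\}:\pi_i<\pi_{i+1}\}|$, with $\pi_{r+1}=\pi_1$. For a non-root vertex $v$ with parent-edge label $\ell$ and children-edge labels $a_{j,1},\dots,a_{j,d_j}$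 (left to right) in compartment $j$, set $\operatorname{cdes}(v)=\operatorname{cdes}(\ell a_{1,1}\cdots a_{1,d_1}\ell a_{2,1}\cdots a_{2,d_2}\ell\cdots\ell a_{k-1,1}\cdots a_{k-1,d_{k-1}})$ and $\operatorname{casc}(v)$ likewise with $\operatorname{casc}$. For the root with children-edge labels $a_1,\dots,a_d$ left to right, $\operatorname{cdes}(v)=\operatorname{des}(a_1\cdots a_d)$ and $\operatorname{casc}(v)=\operatorname{asc}(a_1\cdots a_d)$. Then $\operatorname{cdes}(T)=\sum_v\operatorname{cdes}(v)$, $\operatorname{casc}(T)=\sum_v\operatorname{casc}(v)$, and $\operatorname{emp}(T)$ is the total number of empty compartments over all non-root vertices. *)

theory Defs
  imports Main
begin

text \<open>A non-root vertex: the label of its parent edge and its list of compartments,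
  each compartment being the (left-to-right) list of children. A tree in T^k_n is
  represented by the left-to-right list of the root's children.\<close>
datatype ltree = Node nat "ltree list list"

fun lab :: "ltree \<Rightarrow> nat" where
  "lab (Node l cs) = l"

fun comps :: "ltree \<Rightarrow> ltree list list" where
  "comps (Node l cs) = cs"

fun labs :: "ltree \<Rightarrow> nat list" where
  "labs (Node l cs) = l # concat (map (\<lambda>U. concat (map labs U)) cs)"

fun wf_node :: "nat \<Rightarrow> ltree \<Rightarrow> bool" where
  "wf_node k (Node l cs) = (length cs = k - 1 \<and> (\<forall>U\<in>set cs. \<forall>c\<in>set U. wf_node k c))"

definition tree_labels :: "ltree list \<Rightarrow> nat list" where
  "tree_labels ts = concat (map labs ts)"

definition in_Tkn :: "nat \<Rightarrow> nat \<Rightarrow> ltree list \<Rightarrow> bool" where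
  "in_Tkn k n ts = ((\<forall>t\<in>set ts. wf_node k t) \<and> distinct (tree_labels ts)
                    \<and> set (tree_labels ts) = {1..n})"

fun W :: "ltree \<Rightarrow> nat list" where
  "W (Node l cs) = l # concat (map (\<lambda>U. concat (map W U) @ [l]) cs)"

definition phi :: "ltree list \<Rightarrow> nat list" where
  "phi ts = concat (map W ts)"

text \<open>Statistics on sequences (list index i-1 corresponds to \<pi>_i).\<close>
definition des :: "nat list \<Rightarrow> nat" where
  "des xs = card {i\<in>{1..length xs}. i = length xs \<or> xs ! (i - 1) > xs ! i}"

definition asc :: "nat list \<Rightarrow> nat" where
  "asc xs = card {i\<in>{0..<length xs}. i = 0 \<or> xs ! (i - 1) < xs ! i}"

definition plat :: "nat list \<Rightarrow> nat" where
  "plat xs = card {i\<in>{1..<length xs}. xs ! (i - 1) = xs ! i}"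

definition cdes_seq :: "nat list \<Rightarrow> nat" where
  "cdes_seq xs = card {i\<in>{1..length xs}. xs ! (i - 1) > xs ! (i mod length xs)}"

definition casc_seq :: "nat list \<Rightarrow> nat" where
  "casc_seq xs = card {i\<in>{1..length xs}. xs ! (i - 1) < xs ! (i mod length xs)}"

fun vword :: "ltree \<Rightarrow> nat list" where
  "vword (Node l cs) = concat (map (\<lambda>U. l # map lab U) cs)"

fun cdes_node :: "ltree \<Rightarrow> nat" where
  "cdes_node (Node l cs) = cdes_seq (vword (Node l cs))
     + sum_list (map (\<lambda>U. sum_list (map cdes_node U)) cs)"

fun casc_node :: "ltree \<Rightarrow> nat" where
  "casc_node (Node l cs) = casc_seq (vword (Node l cs))
     + sum_list (map (\<lambda>U. sum_list (map casc_node U)) cs)"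

fun emp_node :: "ltree \<Rightarrow> nat" where
  "emp_node (Node l cs) = length (filter (\<lambda>U. U = []) cs)
     + sum_list (map (\<lambda>U. sum_list (map emp_node U)) cs)"

definition cdes :: "ltree list \<Rightarrow> nat" where
  "cdes ts = des (map lab ts) + sum_list (map cdes_node ts)"

definition casc :: "ltree list \<Rightarrow> nat" where
  "casc ts = asc (map lab ts) + sum_list (map casc_node ts)"

definition emp :: "ltree list \<Rightarrow> nat" where
  "emp ts = sum_list (map emp_node ts)"

end

theory Submission
  imports Defs
begin

text \<open>All statistics count adjacent pairs of a word satisfying a relation: ascents and
  descents of \<pi> are its adjacent pairs under \<open><\<close> and \<open>>\<close> (plus one for the
  boundary), plateaus those under \<open>=\<close>. The word W(c) is the concatenation of the blocks
  [l], W(c') for the children c', and [l] after each compartment; every block begins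
  and ends with the same letter, so an adjacent pair of W(c) lies either inside a block
  or between the heads of consecutive blocks. The block heads spell the vertex word of
  c followed by l, i.e. the vertex word read cyclically. Induction on the tree then
  matches each pair of \<pi> with a cyclic ascent, a cyclic descent or (labels being
  distinct) an empty compartment of a unique vertex.\<close>

fun count_adj :: "('a \<Rightarrow> 'a \<Rightarrow> bool) \<Rightarrow> 'a list \<Rightarrow> nat" where
  "count_adj P (a # b # xs) = (if P a b then 1 else 0) + count_adj P (b # xs)"
| "count_adj P _ = 0"

definition count_cyclic :: "('a \<Rightarrow> 'a \<Rightarrow> bool) \<Rightarrow> 'a list \<Rightarrow> nat" where
  "count_cyclic P xs = card {i\<in>{1..length xs}. P (xs ! (i - 1)) (xs ! (i mod length xs))}"

lemma count_adj_Cons: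
  "count_adj P (a # xs) = (if xs \<noteq> [] \<and> P a (hd xs) then 1 else 0) + count_adj P xs"
  by (cases xs) auto

lemma count_adj_append:
  "count_adj P (xs @ ys) = count_adj P xs + count_adj P ys
     + (if xs \<noteq> [] \<and> ys \<noteq> [] \<and> P (last xs) (hd ys) then 1 else 0)"
  by (induction xs) (auto simp: count_adj_Cons)

lemma count_adj_concat_closed_blocks:
  assumes "\<forall>L\<in>set Ls. L \<noteq> [] \<and> last L = hd L"
  shows "count_adj P (concat Ls) = count_adj P (map hd Ls) + (\<Sum>L\<leftarrow>Ls. count_adj P L)"
  using assms
proof (induction Ls)
  case (Cons L Ls)
  have "Ls \<noteq> [] \<Longrightarrow> concat Ls \<noteq> [] \<and> hd (concat Ls) = hd (hd Ls)"
    using Cons.prems by (cases Ls) auto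
  with Cons show ?case
    by (cases "Ls = []") (auto simp: count_adj_append count_adj_Cons hd_map)
qed simp

lemma count_adj_conv_card:
  "count_adj P xs = card {i\<in>{1..<length xs}. P (xs ! (i - 1)) (xs ! i)}"
proof -
  have "count_adj P xs = length (filter (case_prod P) (zip xs (tl xs)))"
    by (induction P xs rule: count_adj.induct) auto
  also have "\<dots> = card {i. i < length xs - 1 \<and> P (xs ! i) (xs ! Suc i)}"
    unfolding length_filter_conv_card by (rule arg_cong[where f = card]) (auto simp: nth_tl)
  also have "\<dots> = card (Suc ` {i. i < length xs - 1 \<and> P (xs ! i) (xs ! Suc i)})"
    by (simp add: card_image)
  also have "Suc ` {i. i < length xs - 1 \<and> P (xs ! i) (xs ! Suc i)}
      = {i\<in>{1..<length xs}. P (xs ! (i - 1)) (xs ! i)}"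
  proof (intro set_eqI iffI)
    fix i assume "i \<in> {i\<in>{1..<length xs}. P (xs ! (i - 1)) (xs ! i)}"
    then show "i \<in> Suc ` {i. i < length xs - 1 \<and> P (xs ! i) (xs ! Suc i)}"
      by (intro image_eqI[of _ _ "i - 1"]) auto
  qed auto
  finally show ?thesis .
qed

lemma count_cyclic_conv_count_adj:
  assumes "xs \<noteq> []"
  shows "count_cyclic P xs = count_adj P (xs @ [hd xs])"
proof -
  have "{i\<in>{1..length xs}. P (xs ! (i - 1)) (xs ! (i mod length xs))}
      = {i\<in>{1..<length (xs @ [hd xs])}. P ((xs @ [hd xs]) ! (i - 1)) ((xs @ [hd xs]) ! i)}"
    using assms by (auto simp: nth_append hd_conv_nth less_Suc_eq Suc_le_eq)
  then show ?thesis
    by (simp add: count_cyclic_def count_adj_conv_card)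
qed

lemma des_conv_count_adj: "des xs = (if xs = [] then 0 else 1) + count_adj (\<lambda>a b. b < a) xs"
proof (cases "xs = []")
  case False
  then have "{i\<in>{1..length xs}. i = length xs \<or> xs ! (i - 1) > xs ! i}
      = insert (length xs) {i\<in>{1..<length xs}. xs ! (i - 1) > xs ! i}"
    by (auto simp: Suc_le_eq)
  with False show ?thesis
    by (simp add: des_def count_adj_conv_card)
qed (simp add: des_def)

lemma asc_conv_count_adj: "asc xs = (if xs = [] then 0 else 1) + count_adj (<) xs"
proof (cases "xs = []")
  case False
  then have "{i\<in>{0..<length xs}. i = 0 \<or> xs ! (i - 1) < xs ! i}
      = insert 0 {i\<in>{1..<length xs}. xs ! (i - 1) < xs ! i}"
    by auto
  with False show ?thesis
    by (simp add: asc_def count_adj_conv_card)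
qed (simp add: asc_def)

lemma plat_conv_count_adj: "plat xs = count_adj (=) xs"
  by (simp add: plat_def count_adj_conv_card)

lemma W_not_Nil: "W t \<noteq> []"
  by (cases t) auto

lemma hd_W: "hd (W t) = lab t"
  by (cases t) auto

lemma last_W: "last (W t) = lab t"
proof (cases t)
  case (Node l cs)
  have "last (l # concat (map (\<lambda>U. xs U @ [l]) cs)) = l" for xs :: "ltree list \<Rightarrow> nat list"
    by (induction cs) auto
  with Node show ?thesis by simp
qed

lemma W_conv_concat_blocks: "W (Node l cs) = concat ([l] # concat (map (\<lambda>U. map W U @ [[l]]) cs))"
  by (induction cs) auto

lemma vword_snoc: "vword (Node l cs) @ [l] = l # concat (map (\<lambda>U. map lab U @ [l]) cs)"
  by (induction cs) auto

lemma count_adj_W: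
  "count_adj P (W (Node l cs))
     = count_adj P (vword (Node l cs) @ [l]) + (\<Sum>U\<leftarrow>cs. \<Sum>c\<leftarrow>U. count_adj P (W c))"
proof -
  let ?blocks = "[l] # concat (map (\<lambda>U. map W U @ [[l]]) cs)"
  have "\<forall>L\<in>set ?blocks. L \<noteq> [] \<and> last L = hd L"
    by (auto simp: W_not_Nil hd_W last_W)
  moreover have "map hd ?blocks = vword (Node l cs) @ [l]"
    unfolding vword_snoc by (induction cs) (auto simp: hd_W)
  moreover have "(\<Sum>L\<leftarrow>?blocks. count_adj P L) = (\<Sum>U\<leftarrow>cs. \<Sum>c\<leftarrow>U. count_adj P (W c))"
    by (induction cs) (auto simp: o_def)
  ultimately show ?thesis
    unfolding W_conv_concat_blocks by (simp only: count_adj_concat_closed_blocks)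
qed

lemma count_adj_W_eq_cyclic_stat:
  assumes stat: "\<And>l cs. stat (Node l cs)
      = count_cyclic P (vword (Node l cs)) + (\<Sum>U\<leftarrow>cs. \<Sum>c\<leftarrow>U. stat c)"
    and "k \<ge> 2" and "wf_node k t"
  shows "count_adj P (W t) = stat t"
  using assms(3)
proof (induction t)
  case (Node l cs)
  then have "cs \<noteq> []"
    using \<open>k \<ge> 2\<close> by auto
  then have "hd (vword (Node l cs)) = l" and "vword (Node l cs) \<noteq> []"
    by (cases cs; simp)+
  then have "count_adj P (vword (Node l cs) @ [l]) = count_cyclic P (vword (Node l cs))"
    by (simp add: count_cyclic_conv_count_adj)
  moreover have "(\<Sum>U\<leftarrow>cs. \<Sum>c\<leftarrow>U. count_adj P (W c)) = (\<Sum>U\<leftarrow>cs. \<Sum>c\<leftarrow>U. stat c)"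
    using Node by (auto intro!: arg_cong[where f = sum_list] map_cong)
  ultimately show ?case
    by (simp only: count_adj_W stat)
qed

lemma count_adj_W_cdes_node:
  "k \<ge> 2 \<Longrightarrow> wf_node k t \<Longrightarrow> count_adj (\<lambda>a b. b < a) (W t) = cdes_node t"
  by (rule count_adj_W_eq_cyclic_stat) (simp_all add: cdes_seq_def count_cyclic_def)

lemma count_adj_W_casc_node:
  "k \<ge> 2 \<Longrightarrow> wf_node k t \<Longrightarrow> count_adj (<) (W t) = casc_node t"
  by (rule count_adj_W_eq_cyclic_stat) (simp_all add: casc_seq_def count_cyclic_def)

lemma count_adj_eq_distinct: "distinct xs \<Longrightarrow> count_adj (=) xs = 0"
  by (induction "(=) :: 'a \<Rightarrow> 'a \<Rightarrow> bool" xs rule: count_adj.induct) auto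

lemma count_adj_eq_separated_blocks:
  assumes "\<forall>x\<in>set xss. distinct (l # x)"
  shows "count_adj (=) (l # concat (map (\<lambda>x. x @ [l]) xss)) = length (filter (\<lambda>x. x = []) xss)"
  using assms
proof (induction xss)
  case (Cons x xss)
  have "count_adj (=) (l # x) = 0"
    using Cons.prems by (simp add: count_adj_eq_distinct)
  moreover have "last (l # x) = l \<longleftrightarrow> x = []"
    using Cons.prems by auto
  ultimately show ?case
    using Cons count_adj_append[of "(=)" "l # x" "l # concat (map (\<lambda>x. x @ [l]) xss)"] by simp
qed simp

lemma lab_in_labs: "lab t \<in> set (labs t)"
  by (cases t) auto

lemma distinct_map_lab: "distinct (concat (map labs ts)) \<Longrightarrow> distinct (map lab ts)"
proof (induction ts)
  case (Cons t ts)
  have "lab ` set ts \<subseteq> (\<Union>u\<in>set ts. set (labs u))"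
    using lab_in_labs by blast
  with Cons lab_in_labs[of t] show ?case
    by auto
qed simp

lemma count_adj_W_emp_node: "distinct (labs t) \<Longrightarrow> count_adj (=) (W t) = emp_node t"
proof (induction t)
  case (Node l cs)
  then have distinct_vertex: "distinct (l # map lab U)"
    and distinct_child: "c \<in> set U \<Longrightarrow> distinct (labs c)"
    if "U \<in> set cs" for U c
    using that distinct_map_lab lab_in_labs by (fastforce simp: distinct_concat_iff)+
  then have "count_adj (=) (vword (Node l cs) @ [l]) = length (filter (\<lambda>U. U = []) cs)"
    using distinct_vertex count_adj_eq_separated_blocks[of "map (map lab) cs" l]
    unfolding vword_snoc by (simp add: o_def)
  moreover have "(\<Sum>U\<leftarrow>cs. \<Sum>c\<leftarrow>U. count_adj (=) (W c)) = (\<Sum>U\<leftarrow>cs. \<Sum>c\<leftarrow>U. emp_node c)"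
    using Node.IH distinct_child by (auto intro!: arg_cong[where f = sum_list] map_cong)
  ultimately show ?case
    by (simp only: count_adj_W emp_node.simps)
qed

lemma count_adj_phi:
  "count_adj P (phi T) = count_adj P (map lab T) + (\<Sum>t\<leftarrow>T. count_adj P (W t))"
proof -
  have "\<forall>L\<in>set (map W T). L \<noteq> [] \<and> last L = hd L"
    by (auto simp: W_not_Nil hd_W last_W)
  from count_adj_concat_closed_blocks[OF this, of P] show ?thesis
    by (simp add: phi_def o_def hd_W)
qed

lemma phi_eq_Nil_iff: "phi T = [] \<longleftrightarrow> T = []"
  by (auto simp: phi_def W_not_Nil)

theorem lemma4p5:
  fixes k n :: nat and T :: "ltree list"
  assumes "k \<ge> 2" and "in_Tkn k n T"
  shows "asc (phi T) = casc T \<and> des (phi T) = cdes T \<and> plat (phi T) = emp T"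
proof -
  have wf: "\<forall>t\<in>set T. wf_node k t" and distinct: "distinct (concat (map labs T))"
    using assms(2) by (auto simp: in_Tkn_def tree_labels_def)
  then have "(\<Sum>t\<leftarrow>T. count_adj (<) (W t)) = (\<Sum>t\<leftarrow>T. casc_node t)"
    and "(\<Sum>t\<leftarrow>T. count_adj (\<lambda>a b. b < a) (W t)) = (\<Sum>t\<leftarrow>T. cdes_node t)"
    and "(\<Sum>t\<leftarrow>T. count_adj (=) (W t)) = (\<Sum>t\<leftarrow>T. emp_node t)"
    using count_adj_W_casc_node[OF assms(1)] count_adj_W_cdes_node[OF assms(1)]
      count_adj_W_emp_node by (auto intro!: arg_cong[where f = sum_list] simp: distinct_concat_iff)
  moreover have "count_adj (=) (map lab T) = 0"
    using distinct distinct_map_lab count_adj_eq_distinct by blast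
  ultimately show ?thesis
    by (simp add: asc_conv_count_adj des_conv_count_adj plat_conv_count_adj count_adj_phi
        phi_eq_Nil_iff casc_def cdes_def emp_def)
qed

end
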